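(* Let $\chi$ be a Dirichlet character mod $q$ induced by the primitive Dirichlet character $\psi$ mod $q_0$. Then for each $n\ge1$, $$\sum_{d\mid n}\tau(d,\chi)\,\mu(\tfrac nd)\,\overline{\psi(\tfrac nd)}=\begin{cases}n\,\tau(\psi)\,\mu(\frac{q}{nq_0})\,\psi(\frac{q}{nq_0}),& n\mid\frac q{q_0},\\ 0,& n\nmid\frac q{q_0}.\end{cases}$$
   Context: A Dirichlet character mod $m$ is a completely multiplicative $m$-periodic function with $\chi(n)\ne0$ iff $\gcd(n,m)=1$. $\psi$ mod $q_0$ induces $\chi$ mod $q$ if $q_0\mid q$ and $\chi=\psi\chi_q$ with $\chi_q$ the principal character mod $q$; primitive means not induced by a character of modulus a proper divisor. $\mu$ is the Möbius function. For a character $\chi$ mod $m$, $\tau(n,\chi)=\sum_{k=1}^m\chi(k)e^{2\pi ikn/m}$ and $\tau(\chi)=\tau(1,\chi)$. *)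

theory Defs
  imports "HOL-Analysis.Analysis" "HOL-Computational_Algebra.Squarefree"
begin

definition dchar :: "nat \<Rightarrow> (nat \<Rightarrow> complex) \<Rightarrow> bool" where
  "dchar m chi \<longleftrightarrow> m > 0 \<and>
     (\<forall>a b. chi (a * b) = chi a * chi b) \<and>
     (\<forall>n. chi (n + m) = chi n) \<and>
     (\<forall>n. chi n \<noteq> 0 \<longleftrightarrow> coprime n m)"

definition principal_char :: "nat \<Rightarrow> nat \<Rightarrow> complex" where
  "principal_char q n = (if coprime n q then 1 else 0)"

definition induces :: "(nat \<Rightarrow> complex) \<Rightarrow> nat \<Rightarrow> (nat \<Rightarrow> complex) \<Rightarrow> nat \<Rightarrow> bool" where
  "induces psi q0 chi q \<longleftrightarrow> dchar q0 psi \<and> dchar q chi \<and> q0 dvd q \<and>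
     (\<forall>n. chi n = psi n * principal_char q n)"

definition primitive :: "nat \<Rightarrow> (nat \<Rightarrow> complex) \<Rightarrow> bool" where
  "primitive m chi \<longleftrightarrow> dchar m chi \<and>
     \<not> (\<exists>d phi. d dvd m \<and> d \<noteq> m \<and> induces phi d chi m)"

definition moebius :: "nat \<Rightarrow> int" where
  "moebius n = (if squarefree n then (-1) ^ card (prime_factors n) else 0)"

definition gauss_sum :: "nat \<Rightarrow> (nat \<Rightarrow> complex) \<Rightarrow> nat \<Rightarrow> complex" where
  "gauss_sum n chi m = (\<Sum>k=1..m. chi k * exp (2 * pi * \<i> * of_nat k * of_nat n / of_nat m))"

end

theory Submission
  imports Defs "HOL-Number_Theory.Residues"
begin

text \<open>
  Write \<open>r = q div q0\<close>. Since \<open>\<chi> = \<psi> \<chi>\<^sub>q\<close>, expanding the principal character by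
  Moebius inversion over the divisors \<open>e\<close> of \<open>r\<close> gives
  \<open>\<tau>(n, \<chi>) = \<Sum>\<^bsub>e | r\<^esub> \<mu>(e) \<psi>(e) \<tau>(n, \<psi> mod q/e)\<close>, where \<open>\<psi>\<close> is read as a function of
  period \<open>q/e = q0 (r/e)\<close>. Cutting that Gauss sum into blocks of length \<open>q0\<close> shows
  \<open>\<tau>(n, \<psi> mod q0 s) = s \<tau>(n/s, \<psi>)\<close> if \<open>s | n\<close> and \<open>0\<close> otherwise, and for primitive \<open>\<psi>\<close>
  one has \<open>\<tau>(m, \<psi>) = conj \<psi>(m) \<tau>(\<psi>)\<close> for all \<open>m\<close>. Hence
  \<open>\<tau>(d, \<chi>) = \<tau>(\<psi>) \<Sum>\<^bsub>s | gcd r d\<^esub> s \<mu>(r/s) \<psi>(r/s) conj \<psi>(d/s)\<close>, and convolving with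
  \<open>\<mu> conj \<psi>\<close>, the Dirichlet inverse of the completely multiplicative \<open>conj \<psi>\<close>, leaves only
  the term \<open>s = n\<close>.
\<close>

section \<open>Additive characters\<close>

text \<open>\<open>unity_root 0 x = 1\<close>, since division by \<open>0\<close> yields \<open>0\<close>; this is why several of the
  following lemmas need no positivity hypothesis.\<close>

definition unity_root :: "nat \<Rightarrow> nat \<Rightarrow> complex" where
  "unity_root m x = exp (2 * pi * \<i> * of_nat x / of_nat m)"

lemma unity_root_add: "unity_root m (a + b) = unity_root m a * unity_root m b"
  unfolding unity_root_def by (simp add: add_divide_distrib distrib_left exp_add)

lemma unity_root_power: "unity_root m x ^ t = unity_root m (x * t)"
  unfolding unity_root_def exp_of_nat_mult[symmetric] by (simp add: mult_ac)

lemma unity_root_mult_self [simp]: "unity_root m (m * t) = 1"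
proof -
  have "unity_root m m = 1"
    unfolding unity_root_def by (cases "m = 0") simp_all
  then show ?thesis
    using unity_root_power[of m m t] by simp
qed

lemma unity_root_0 [simp]: "unity_root m 0 = 1"
  by (simp add: unity_root_def)

lemma unity_root_mod: "unity_root m (x mod m) = unity_root m x"
  using unity_root_add[of m "x mod m" "m * (x div m)"] by simp

lemma unity_root_cong: "[a = b] (mod m) \<Longrightarrow> unity_root m a = unity_root m b"
  by (metis cong_def unity_root_mod)

lemma unity_root_mult_mult: "e > 0 \<Longrightarrow> unity_root (e * m) (e * x) = unity_root m x"
  unfolding unity_root_def by (simp add: field_simps)

lemma unity_root_eq_1_iff:
  assumes "m > 0"
  shows "unity_root m x = 1 \<longleftrightarrow> m dvd x"
proof
  assume "unity_root m x = 1"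
  then obtain k :: int where "2 * pi * real x / real m = of_int (2 * k) * pi"
    unfolding unity_root_def exp_eq_1 by auto
  then have "real x = real m * of_int k"
    using assms by (simp add: field_simps)
  then have "int x = int m * k"
    by (metis of_int_eq_iff of_int_mult of_int_of_nat_eq)
  then show "m dvd x"
    by (metis dvd_triv_left int_dvd_int_iff)
qed auto

lemma sum_unity_root:
  assumes "s > 0"
  shows "(\<Sum>t<s. unity_root s (t * n)) = (if s dvd n then of_nat s else 0)"
proof -
  have "(\<Sum>t<s. unity_root s (t * n)) = (\<Sum>t<s. unity_root s n ^ t)"
    by (simp add: unity_root_power mult.commute)
  also have "\<dots> = (if s dvd n then of_nat s else 0)"
  proof (cases "s dvd n")
    case True
    then have "unity_root s n = 1"
      using unity_root_eq_1_iff[OF assms] by simp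
    with True show ?thesis
      by simp
  next
    case False
    then have "unity_root s n \<noteq> 1"
      using unity_root_eq_1_iff[OF assms] by simp
    moreover have "unity_root s n ^ s = 1"
      unfolding unity_root_power by (subst mult.commute) simp
    ultimately show ?thesis
      using geometric_sum[of "unity_root s n" s] False by simp
  qed
  finally show ?thesis .
qed

section \<open>Dirichlet characters\<close>

lemma dchar_modulus_pos: "dchar m chi \<Longrightarrow> m > 0"
  unfolding dchar_def by blast

lemma dchar_mult: "dchar m chi \<Longrightarrow> chi (a * b) = chi a * chi b"
  unfolding dchar_def by blast

lemma dchar_eq_0_iff: "dchar m chi \<Longrightarrow> chi n = 0 \<longleftrightarrow> \<not> coprime n m"
  unfolding dchar_def by blast

lemma dchar_add_mult: "dchar m chi \<Longrightarrow> chi (a + k * m) = chi a"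
proof (induction k)
  case (Suc k)
  then have "chi (a + k * m + m) = chi (a + k * m)"
    unfolding dchar_def by blast
  with Suc show ?case
    by (simp add: ac_simps)
qed simp

lemma dchar_mod: "dchar m chi \<Longrightarrow> chi (n mod m) = chi n"
  by (metis dchar_add_mult mod_div_mult_eq)

lemma dchar_cong: "dchar m chi \<Longrightarrow> [a = b] (mod m) \<Longrightarrow> chi a = chi b"
  by (metis cong_def dchar_mod)

lemma dchar_1:
  assumes "dchar m chi"
  shows "chi 1 = 1"
proof -
  have "chi 1 = chi 1 * chi 1"
    using dchar_mult[OF assms, of 1 1] by simp
  moreover have "chi 1 \<noteq> 0"
    using dchar_eq_0_iff[OF assms] by simp
  ultimately show ?thesis
    by simp
qed

lemma dchar_power:
  assumes "dchar m chi"
  shows "chi (n ^ k) = chi n ^ k"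
  using dchar_1[OF assms] by (induction k) (simp_all add: dchar_mult[OF assms])

lemma dchar_cnj_mult_self:
  assumes chi: "dchar m chi" and "coprime n m"
  shows "cnj (chi n) * chi n = 1"
proof -
  have "chi n ^ totient m = 1"
    using euler_theorem[OF \<open>coprime n m\<close>] dchar_cong[OF chi] dchar_power[OF chi] dchar_1[OF chi]
    by metis
  moreover have "totient m > 0"
    using dchar_modulus_pos[OF chi] by simp
  ultimately have "norm (chi n) = 1"
    using power_eq_1_iff[of "chi n" "totient m"] by simp
  then show ?thesis
    by (metis complex_norm_square mult.commute of_real_1 power_one)
qed

section \<open>Moebius function and divisor sums\<close>

lemma moebius_eq_0_if_square_dvd:
  assumes "prime p" "p ^ 2 dvd d"
  shows "moebius d = 0"
  using assms not_squarefreeI[of p d] prime_gt_1_nat[of p] unfolding moebius_def by auto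

lemma moebius_prime_mult:
  assumes p: "prime p" and "\<not> p dvd d" "d > 0"
  shows "moebius (p * d) = - moebius d"
proof -
  have "coprime p d"
    using assms by (simp add: prime_imp_coprime)
  then have "squarefree (p * d) \<longleftrightarrow> squarefree d"
    using squarefree_mult_coprime squarefree_prime[OF p] squarefree_multD by blast
  moreover have "prime_factors (p * d) = insert p (prime_factors d)"
    using prime_factors_product[of p d] assms by (auto simp: prime_prime_factors)
  moreover have "p \<notin> prime_factors d"
    using assms by auto
  ultimately show ?thesis
    unfolding moebius_def by simp
qed

lemma sum_moebius_divisors_multiples_prime:
  assumes p: "prime p" and "p dvd m" "m > 0"
  shows "(\<Sum>d | d dvd m \<and> p dvd d. of_int (moebius d) :: 'a::comm_ring_1)
    = - (\<Sum>d | d dvd m \<and> \<not> p dvd d. of_int (moebius d))"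
proof -
  let ?\<mu> = "\<lambda>d. of_int (moebius d) :: 'a"
  define A where "A = {d. d dvd m \<and> \<not> p dvd d}"
  have "(\<Sum>d | d dvd m \<and> p dvd d. ?\<mu> d) = sum ?\<mu> ((*) p ` A)"
  proof (rule sum.mono_neutral_right)
    show "(*) p ` A \<subseteq> {d. d dvd m \<and> p dvd d}"
      using p \<open>p dvd m\<close> by (auto simp: A_def prime_imp_coprime divides_mult)
    show "\<forall>d\<in>{d. d dvd m \<and> p dvd d} - (*) p ` A. ?\<mu> d = 0"
    proof
      fix d assume d: "d \<in> {d. d dvd m \<and> p dvd d} - (*) p ` A"
      then obtain e where e: "d = p * e"
        by blast
      with d have "p dvd e"
        by (auto simp: A_def dest: dvd_mult_right)
      with e have "p ^ 2 dvd d"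
        by (simp add: power2_eq_square)
      then show "?\<mu> d = 0"
        using moebius_eq_0_if_square_dvd[OF p] by simp
    qed
  qed (use \<open>m > 0\<close> in auto)
  also have "\<dots> = (\<Sum>d\<in>A. ?\<mu> (p * d))"
    using p by (simp add: sum.reindex inj_on_def prime_gt_0_nat)
  also have "\<dots> = (\<Sum>d\<in>A. - ?\<mu> d)"
    using \<open>m > 0\<close> by (intro sum.cong refl) (auto simp: A_def moebius_prime_mult[OF p] intro: gr0I)
  also have "\<dots> = - sum ?\<mu> A"
    by (simp add: sum_negf)
  finally show ?thesis
    by (simp add: A_def)
qed

lemma sum_moebius_divisors:
  assumes "m > 0"
  shows "(\<Sum>d | d dvd m. of_int (moebius d) :: 'a::comm_ring_1) = (if m = 1 then 1 else 0)"
proof (cases "m = 1")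
  case False
  obtain p where p: "prime p" "p dvd m"
    using prime_factor_nat[OF False] by blast
  have "(\<Sum>d \<in> {d. d dvd m \<and> p dvd d} \<union> {d. d dvd m \<and> \<not> p dvd d}. of_int (moebius d) :: 'a)
      = (\<Sum>d | d dvd m \<and> p dvd d. of_int (moebius d)) + (\<Sum>d | d dvd m \<and> \<not> p dvd d. of_int (moebius d))"
    by (rule sum.union_disjoint) (use \<open>m > 0\<close> in auto)
  moreover have "{d. d dvd m \<and> p dvd d} \<union> {d. d dvd m \<and> \<not> p dvd d} = {d. d dvd m}"
    by auto
  ultimately have "(\<Sum>d | d dvd m. of_int (moebius d) :: 'a)
      = (\<Sum>d | d dvd m \<and> p dvd d. of_int (moebius d)) + (\<Sum>d | d dvd m \<and> \<not> p dvd d. of_int (moebius d))"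
    by simp
  with False show ?thesis
    using sum_moebius_divisors_multiples_prime[OF p \<open>m > 0\<close>] by (simp add: eq_neg_iff_add_eq_0)
qed (simp add: moebius_def)

lemma sum_divisors_div_reindex:
  assumes "(m::nat) > 0"
  shows "(\<Sum>d | d dvd m. f (m div d)) = (\<Sum>d | d dvd m. f d)"
  by (rule sum.reindex_bij_witness[of _ "\<lambda>d. m div d" "\<lambda>d. m div d"]) (use assms in \<open>auto elim!: dvdE\<close>)

lemma sum_divisors_multiples:
  assumes "(n::nat) > 0" "s dvd n"
  shows "(\<Sum>d | d dvd n \<and> s dvd d. g d) = (\<Sum>d | d dvd n div s. g (s * d))"
proof -
  have "s > 0"
    using assms by (auto intro: gr0I)
  have "{d. d dvd n \<and> s dvd d} = (*) s ` {d. d dvd n div s}"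
    using assms by (auto elim!: dvdE)
  then show ?thesis
    using \<open>s > 0\<close> by (simp add: sum.reindex inj_on_def)
qed

lemma sum_divisors_mult_moebius:
  fixes f :: "nat \<Rightarrow> 'a::comm_ring_1"
  assumes "m > 0" "f 1 = 1" and f_mult: "\<And>a b. f (a * b) = f a * f b"
  shows "(\<Sum>d | d dvd m. f d * of_int (moebius (m div d)) * f (m div d)) = (if m = 1 then 1 else 0)"
proof -
  have "(\<Sum>d | d dvd m. f d * of_int (moebius (m div d)) * f (m div d))
      = f m * (\<Sum>d | d dvd m. of_int (moebius (m div d)))"
    unfolding sum_distrib_left
  proof (intro sum.cong refl)
    fix d assume "d \<in> {d. d dvd m}"
    then have "f m = f d * f (m div d)"
      using f_mult[of d "m div d"] by simp
    then show "f d * of_int (moebius (m div d)) * f (m div d) = f m * of_int (moebius (m div d))"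
      by (simp add: ac_simps)
  qed
  also have "\<dots> = f m * (if m = 1 then 1 else 0)"
    by (simp only: sum_divisors_div_reindex[OF \<open>m > 0\<close>, of "\<lambda>d. of_int (moebius d) :: 'a"]
        sum_moebius_divisors[OF \<open>m > 0\<close>])
  finally show ?thesis
    using \<open>f 1 = 1\<close> by simp
qed

lemma sum_divisors_multiples_mult_moebius:
  fixes f :: "nat \<Rightarrow> 'a::comm_ring_1"
  assumes "n > 0" "s > 0" "f 1 = 1" "\<And>a b. f (a * b) = f a * f b"
  shows "(\<Sum>d | d dvd n. (if s dvd d then f (d div s) else 0) * of_int (moebius (n div d)) * f (n div d))
    = (if n = s then 1 else 0)"
proof (cases "s dvd n")
  case True
  have "(\<Sum>d | d dvd n. (if s dvd d then f (d div s) else 0) * of_int (moebius (n div d)) * f (n div d))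
      = (\<Sum>d | d dvd n. if s dvd d then f (d div s) * of_int (moebius (n div d)) * f (n div d) else 0)"
    by (intro sum.cong) auto
  also have "\<dots> = (\<Sum>d | d dvd n \<and> s dvd d. f (d div s) * of_int (moebius (n div d)) * f (n div d))"
    using \<open>n > 0\<close> by (simp add: sum.inter_filter[symmetric] conj_commute)
  also have "\<dots> = (\<Sum>d | d dvd n div s. f d * of_int (moebius (n div s div d)) * f (n div s div d))"
    using \<open>s > 0\<close> by (simp add: sum_divisors_multiples[OF \<open>n > 0\<close> True] div_mult2_eq)
  also have "\<dots> = (if n div s = 1 then 1 else 0)"
    using True assms by (intro sum_divisors_mult_moebius) (auto elim!: dvdE)
  finally show ?thesis
    using True \<open>s > 0\<close> by (auto elim!: dvdE)
next
  case False
  then have "n \<noteq> s"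
    by auto
  moreover have "\<forall>d \<in> {d. d dvd n}. \<not> s dvd d"
    using False dvd_trans by blast
  ultimately show ?thesis
    by simp
qed

lemma sum_divisors_mult_moebius_inversion:
  fixes f c :: "nat \<Rightarrow> 'a::comm_ring_1"
  assumes "n > 0" "r > 0" "f 1 = 1" "\<And>a b. f (a * b) = f a * f b"
  shows "(\<Sum>d | d dvd n. (\<Sum>s | s dvd r. c s * (if s dvd d then f (d div s) else 0)) *
      of_int (moebius (n div d)) * f (n div d)) = (if n dvd r then c n else 0)"
proof -
  have "(\<Sum>d | d dvd n. (\<Sum>s | s dvd r. c s * (if s dvd d then f (d div s) else 0)) *
      of_int (moebius (n div d)) * f (n div d))
    = (\<Sum>s | s dvd r. c s * (\<Sum>d | d dvd n.
        (if s dvd d then f (d div s) else 0) * of_int (moebius (n div d)) * f (n div d)))"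
    unfolding sum_distrib_left sum_distrib_right by (subst sum.swap) (simp add: mult.assoc)
  also have "\<dots> = (\<Sum>s | s dvd r. if n = s then c s else 0)"
  proof (intro sum.cong refl)
    fix s assume "s \<in> {s. s dvd r}"
    with \<open>r > 0\<close> have "s > 0"
      by (auto intro: gr0I)
    then show "c s * (\<Sum>d | d dvd n. (if s dvd d then f (d div s) else 0) *
        of_int (moebius (n div d)) * f (n div d)) = (if n = s then c s else 0)"
      using sum_divisors_multiples_mult_moebius[OF \<open>n > 0\<close> _ assms(3,4)] by simp
  qed
  also have "\<dots> = (if n dvd r then c n else 0)"
    using \<open>r > 0\<close> by simp
  finally show ?thesis .
qed

section \<open>Primitive characters\<close>

text \<open>Every prime factor of \<open>m\<close> divides exactly one of \<open>a\<close> and \<open>q1 t\<close>.\<close>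

lemma coprime_add_mult_prod_prime_factors:
  fixes a q1 m :: nat
  assumes "m > 0" "coprime a q1"
  defines "t \<equiv> \<Prod>{p \<in> prime_factors m. \<not> p dvd a}"
  shows "coprime (a + q1 * t) m"
proof (rule ccontr)
  define P where "P = {p \<in> prime_factors m. \<not> p dvd a}"
  have "finite P" and t: "t = \<Prod>P"
    unfolding P_def t_def by simp_all
  assume "\<not> coprime (a + q1 * t) m"
  then obtain p where p: "prime p" "p dvd gcd (a + q1 * t) m"
    using prime_factor_nat[of "gcd (a + q1 * t) m"] by (auto simp: coprime_iff_gcd_eq_1)
  show False
  proof (cases "p dvd a")
    case True
    then have "\<not> p dvd q1"
      using assms(2) p(1) coprime_common_divisor not_prime_unit by blast
    moreover have "\<not> p dvd t"
    proof
      assume "p dvd t"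
      then obtain p' where "p' \<in> P" "p dvd p'"
        unfolding t using prime_dvd_prod_iff[OF \<open>finite P\<close> p(1), of id] by auto
      then show False
        using True p(1) primes_dvd_imp_eq[of p p'] by (auto simp: P_def)
    qed
    moreover have "p dvd q1 * t"
      using p True by (simp add: dvd_add_right_iff)
    ultimately show False
      using prime_dvd_mult_iff[OF p(1)] by blast
  next
    case False
    with p assms(1) have "p \<in> P"
      by (auto simp: P_def in_prime_factors_iff)
    then have "p dvd q1 * t"
      unfolding t using dvd_prodI[OF \<open>finite P\<close>, of p "\<lambda>x. x"] by simp
    with p False show False
      by (simp add: dvd_add_left_iff)
  qed
qed

lemma exists_cong_coprime:
  fixes a q1 m :: nat
  assumes "m > 0" "coprime a q1"
  obtains b where "[b = a] (mod q1)" "coprime b m"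
proof
  let ?t = "\<Prod>{p \<in> prime_factors m. \<not> p dvd a}"
  show "[a + q1 * ?t = a] (mod q1)"
    by (simp add: cong_def)
  show "coprime (a + q1 * ?t) m"
    using coprime_add_mult_prod_prime_factors[OF assms] .
qed

text \<open>When \<open>\<chi>\<close> is constant modulo \<open>q1\<close> on the units modulo \<open>m\<close>, this is the character
  modulo \<open>q1\<close> that induces \<open>\<chi>\<close>.\<close>

definition factor_char :: "nat \<Rightarrow> nat \<Rightarrow> (nat \<Rightarrow> complex) \<Rightarrow> nat \<Rightarrow> complex" where
  "factor_char m q1 chi a = (if coprime a q1 then chi (SOME b. [b = a] (mod q1) \<and> coprime b m) else 0)"

lemma factor_char_eq:
  assumes "m > 0" "q1 dvd m"
    and const: "\<And>x y. coprime x m \<Longrightarrow> coprime y m \<Longrightarrow> [x = y] (mod q1) \<Longrightarrow> chi x = chi y"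
    and b: "coprime b m" "[b = a] (mod q1)"
  shows "factor_char m q1 chi a = chi b"
proof -
  define l where "l = (SOME b. [b = a] (mod q1) \<and> coprime b m)"
  have "coprime b q1"
    using coprime_divisors[OF dvd_refl \<open>q1 dvd m\<close> b(1)] .
  then have a: "coprime a q1"
    using cong_imp_coprime[OF b(2)] by blast
  obtain b' where "[b' = a] (mod q1)" "coprime b' m"
    using exists_cong_coprime[OF \<open>m > 0\<close> a] .
  then have l: "[l = a] (mod q1)" "coprime l m"
    unfolding l_def using someI[of "\<lambda>b. [b = a] (mod q1) \<and> coprime b m" b'] by blast+
  have "chi l = chi b"
    using const[OF l(2) b(1) cong_trans[OF l(1) cong_sym[OF b(2)]]] .
  with a show ?thesis
    unfolding factor_char_def l_def by simp
qed

lemma dchar_factor_char: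
  assumes chi: "dchar m chi" and "q1 dvd m"
    and const: "\<And>x y. coprime x m \<Longrightarrow> coprime y m \<Longrightarrow> [x = y] (mod q1) \<Longrightarrow> chi x = chi y"
  shows "dchar q1 (factor_char m q1 chi)"
proof -
  let ?phi = "factor_char m q1 chi"
  have "m > 0"
    using dchar_modulus_pos[OF chi] .
  have phi_eq: "?phi a = chi b" if "coprime b m" "[b = a] (mod q1)" for a b
    using factor_char_eq[OF \<open>m > 0\<close> \<open>q1 dvd m\<close> const that] .
  have "?phi (a * b) = ?phi a * ?phi b" for a b
  proof (cases "coprime a q1 \<and> coprime b q1")
    case True
    obtain x where x: "[x = a] (mod q1)" "coprime x m"
      using exists_cong_coprime[OF \<open>m > 0\<close>] True by blast
    obtain y where y: "[y = b] (mod q1)" "coprime y m"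
      using exists_cong_coprime[OF \<open>m > 0\<close>] True by blast
    have "?phi (a * b) = chi (x * y)"
      using x y by (intro phi_eq) (auto intro: cong_mult)
    then show ?thesis
      using phi_eq[OF x(2,1)] phi_eq[OF y(2,1)] by (simp add: dchar_mult[OF chi])
  qed (auto simp: factor_char_def)
  moreover have "?phi (a + q1) = ?phi a" for a
  proof (cases "coprime a q1")
    case True
    then obtain x where "[x = a] (mod q1)" "coprime x m"
      using exists_cong_coprime[OF \<open>m > 0\<close>] by blast
    then show ?thesis
      using phi_eq[of x a] phi_eq[of x "a + q1"] by (simp add: cong_def)
  qed (simp add: factor_char_def coprime_iff_gcd_eq_1)
  moreover have "?phi a \<noteq> 0 \<longleftrightarrow> coprime a q1" for a
  proof (cases "coprime a q1")
    case True
    then obtain x where "[x = a] (mod q1)" "coprime x m"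
      using exists_cong_coprime[OF \<open>m > 0\<close>] by blast
    with True show ?thesis
      using phi_eq[of x a] dchar_eq_0_iff[OF chi] by simp
  qed (simp add: factor_char_def)
  moreover have "q1 > 0"
    using \<open>m > 0\<close> \<open>q1 dvd m\<close> by (auto intro: gr0I)
  ultimately show ?thesis
    unfolding dchar_def by blast
qed

lemma induces_if_constant_mod:
  assumes chi: "dchar m chi" and "q1 dvd m"
    and const: "\<And>x y. coprime x m \<Longrightarrow> coprime y m \<Longrightarrow> [x = y] (mod q1) \<Longrightarrow> chi x = chi y"
  shows "induces (factor_char m q1 chi) q1 chi m"
proof -
  have "chi n = factor_char m q1 chi n * principal_char m n" for n
  proof (cases "coprime n m")
    case True
    then show ?thesis
      using factor_char_eq[OF dchar_modulus_pos[OF chi] \<open>q1 dvd m\<close> const True cong_refl]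
      by (simp add: principal_char_def)
  qed (simp add: principal_char_def dchar_eq_0_iff[OF chi])
  then show ?thesis
    unfolding induces_def using chi dchar_factor_char[OF assms] \<open>q1 dvd m\<close> by blast
qed

lemma primitive_obtain_nontrivial_unit:
  assumes prim: "primitive m chi" and "q1 dvd m" "q1 \<noteq> m"
  obtains c where "coprime c m" "[c = 1] (mod q1)" "chi c \<noteq> 1"
proof -
  have chi: "dchar m chi"
    using prim unfolding primitive_def by blast
  have "\<exists>x y. coprime x m \<and> coprime y m \<and> [x = y] (mod q1) \<and> chi x \<noteq> chi y"
  proof (rule ccontr)
    assume "\<not> ?thesis"
    then have "induces (factor_char m q1 chi) q1 chi m"
      by (intro induces_if_constant_mod[OF chi \<open>q1 dvd m\<close>]) blast
    with prim assms show False
      unfolding primitive_def by blast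
  qed
  then obtain x y where xy: "coprime x m" "coprime y m" "[x = y] (mod q1)" "chi x \<noteq> chi y"
    by blast
  obtain y' where y': "[y * y' = 1] (mod m)"
    using cong_solve_coprime_nat[OF xy(2)] by auto
  then have "coprime y' m"
    using cong_imp_coprime[OF cong_sym[OF y']] by simp
  have "chi y' \<noteq> 0"
    using dchar_eq_0_iff[OF chi] \<open>coprime y' m\<close> by blast
  with xy(4) have "chi (x * y') \<noteq> chi (y * y')"
    by (simp add: dchar_mult[OF chi])
  then have "chi (x * y') \<noteq> 1"
    using dchar_cong[OF chi y'] dchar_1[OF chi] by simp
  moreover have "[x * y' = 1] (mod q1)"
    using cong_trans[OF cong_mult[OF xy(3) cong_refl] cong_dvd_modulus_nat[OF y' \<open>q1 dvd m\<close>]] .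
  moreover have "coprime (x * y') m"
    using xy(1) \<open>coprime y' m\<close> by simp
  ultimately show ?thesis
    using that by blast
qed

section \<open>Gauss sums\<close>

lemma gauss_sum_unity_root: "gauss_sum n chi m = (\<Sum>k=1..m. chi k * unity_root m (k * n))"
  unfolding gauss_sum_def unity_root_def by (simp add: mult.assoc)

lemma gauss_sum_cong:
  assumes "[a = b] (mod m)"
  shows "gauss_sum a chi m = gauss_sum b chi m"
proof -
  have "unity_root m (k * a) = unity_root m (k * b)" for k
    using unity_root_cong cong_scalar_left[OF assms] by blast
  then show ?thesis
    by (simp add: gauss_sum_unity_root)
qed

lemma gauss_sum_lessThan:
  assumes "chi m = chi 0"
  shows "gauss_sum n chi m = (\<Sum>k<m. chi k * unity_root m (k * n))"
proof (cases "m = 0")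
  case False
  then have "{1..m} = insert m {1..<m}" "{..<m} = insert 0 {1..<m}"
    by auto
  with assms show ?thesis
    by (simp add: gauss_sum_unity_root)
qed (simp add: gauss_sum_def)

lemma sum_lessThan_mult_coprime:
  fixes f :: "nat \<Rightarrow> 'a::comm_monoid_add"
  assumes "coprime c m" and periodic: "\<And>k. f (k mod m) = f k"
  shows "(\<Sum>k<m. f (c * k)) = (\<Sum>k<m. f k)"
proof -
  let ?g = "\<lambda>k. c * k mod m"
  have "inj_on ?g {..<m}"
  proof (rule inj_onI)
    fix x y assume "x \<in> {..<m}" "y \<in> {..<m}" "?g x = ?g y"
    then show "x = y"
      using cong_mult_lcancel_nat[OF \<open>coprime c m\<close>, of x y] by (simp add: cong_def)
  qed
  moreover have "?g ` {..<m} = {..<m}"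
    using \<open>inj_on ?g {..<m}\<close> by (intro endo_inj_surj) (auto intro: gr0I)
  ultimately have "(\<Sum>k<m. f (?g k)) = (\<Sum>k<m. f k)"
    using sum.reindex[of ?g "{..<m}" f] by simp
  then show ?thesis
    using periodic by simp
qed

lemma sum_lessThan_mult_blocks:
  fixes f :: "nat \<Rightarrow> 'a::comm_monoid_add"
  shows "(\<Sum>j<s * q. f j) = (\<Sum>t<s. \<Sum>a<q. f (a + t * q))"
  unfolding sum.nat_group[symmetric]
proof (rule sum.cong[OF refl])
  fix t
  show "sum f {t * q..<t * q + q} = (\<Sum>a<q. f (a + t * q))"
    using sum.shift_bounds_nat_ivl[of f 0 "t * q" q] by (simp add: atLeast0LessThan add.commute)
qed

lemma gauss_sum_mult_coprime:
  assumes chi: "dchar m chi" and "coprime c m"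
  shows "chi c * gauss_sum (c * n) chi m = gauss_sum n chi m"
proof -
  define f where "f k = chi k * unity_root m (k * n)" for k
  have chi_m: "chi m = chi 0"
    using dchar_mod[OF chi, of m] by simp
  have periodic: "f (k mod m) = f k" for k
  proof -
    have "[k mod m * n = k * n] (mod m)"
      by (simp add: cong_def mod_mult_left_eq)
    then show ?thesis
      using unity_root_cong by (simp add: f_def dchar_mod[OF chi])
  qed
  have "chi c * gauss_sum (c * n) chi m = (\<Sum>k<m. f (c * k))"
    unfolding gauss_sum_lessThan[OF chi_m] sum_distrib_left f_def
    by (intro sum.cong refl) (simp add: dchar_mult[OF chi] mult_ac)
  also have "\<dots> = (\<Sum>k<m. f k)"
    by (rule sum_lessThan_mult_coprime[OF \<open>coprime c m\<close>]) (rule periodic)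
  also have "\<dots> = gauss_sum n chi m"
    unfolding gauss_sum_lessThan[OF chi_m] f_def ..
  finally show ?thesis .
qed

lemma gauss_sum_coprime:
  assumes chi: "dchar m chi" and "coprime n m"
  shows "gauss_sum n chi m = cnj (chi n) * gauss_sum 1 chi m"
proof -
  have "gauss_sum n chi m = cnj (chi n) * (chi n * gauss_sum n chi m)"
    using dchar_cnj_mult_self[OF assms] by (simp add: mult.assoc [symmetric])
  also have "chi n * gauss_sum n chi m = gauss_sum 1 chi m"
    using gauss_sum_mult_coprime[OF assms, of 1] by simp
  finally show ?thesis .
qed

text \<open>With \<open>g = gcd n m\<close>, primitivity yields \<open>c \<equiv> 1 (mod m div g)\<close> with \<open>\<chi> c \<noteq> 1\<close>. Then
  \<open>c n \<equiv> n (mod m)\<close>, so multiplying by \<open>\<chi> c\<close> leaves \<open>\<tau>(n, \<chi>)\<close> unchanged.\<close>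

lemma primitive_gauss_sum_eq_0:
  assumes prim: "primitive m chi" and "\<not> coprime n m"
  shows "gauss_sum n chi m = 0"
proof -
  have chi: "dchar m chi"
    using prim unfolding primitive_def by blast
  then have "m > 0"
    by (rule dchar_modulus_pos)
  define g where "g = gcd n m"
  define q1 where "q1 = m div g"
  have m: "m = q1 * g"
    by (simp add: q1_def g_def)
  moreover have "g \<noteq> 1"
    using \<open>\<not> coprime n m\<close> by (simp add: g_def coprime_iff_gcd_eq_1)
  ultimately have "q1 \<noteq> m"
    using \<open>m > 0\<close> by auto
  then obtain c where c: "coprime c m" "[c = 1] (mod q1)" "chi c \<noteq> 1"
    using primitive_obtain_nontrivial_unit[OF prim] m by (metis dvd_triv_left)
  have "g dvd n"
    by (simp add: g_def)
  then obtain v where "n = g * v"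
    by (rule dvdE)
  then have "[c * n = 1 * n] (mod m)"
    unfolding m using cong_scalar_right[OF cong_cmult_rightI[OF c(2), of g], of v] by (simp add: mult.assoc)
  then have "chi c * gauss_sum n chi m = gauss_sum n chi m"
    using gauss_sum_mult_coprime[OF chi c(1), of n] gauss_sum_cong by simp
  with c(3) show ?thesis
    by simp
qed

lemma gauss_sum_primitive:
  assumes prim: "primitive m chi"
  shows "gauss_sum n chi m = cnj (chi n) * gauss_sum 1 chi m"
proof (cases "coprime n m")
  case True
  with prim show ?thesis
    unfolding primitive_def by (blast intro: gauss_sum_coprime)
next
  case False
  with prim have "chi n = 0"
    unfolding primitive_def using dchar_eq_0_iff by blast
  with prim False show ?thesis
    by (simp add: primitive_gauss_sum_eq_0)
qed

section \<open>Gauss sums of induced characters\<close>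

text \<open>Here \<open>\<psi>\<close> is merely \<open>q0 * s\<close>-periodic, not a character modulo \<open>q0 * s\<close>; the Gauss sum
  is defined for arbitrary functions.\<close>

lemma gauss_sum_multiple_modulus:
  assumes psi: "dchar q0 psi" and "s > 0"
  shows "gauss_sum n psi (q0 * s) = (if s dvd n then of_nat s * gauss_sum (n div s) psi q0 else 0)"
proof -
  have "q0 > 0"
    using dchar_modulus_pos[OF psi] .
  define N where "N = q0 * s"
  define f where "f j = psi j * unity_root N (j * n)" for j
  have "psi N = psi 0"
    using dchar_mod[OF psi, of N] by (simp add: N_def)
  then have "gauss_sum n psi N = (\<Sum>j<N. f j)"
    unfolding f_def by (rule gauss_sum_lessThan)
  also have "\<dots> = (\<Sum>j<s * q0. f j)"
    by (simp add: N_def mult.commute)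
  also have "\<dots> = (\<Sum>t<s. \<Sum>a<q0. f (a + t * q0))"
    by (rule sum_lessThan_mult_blocks)
  also have "\<dots> = (\<Sum>t<s. \<Sum>a<q0. psi a * unity_root N (a * n) * unity_root s (t * n))"
  proof (intro sum.cong refl)
    fix t a
    have "unity_root N (t * q0 * n) = unity_root s (t * n)"
      using unity_root_mult_mult[OF \<open>q0 > 0\<close>, of s "t * n"] by (simp add: N_def mult_ac)
    then show "f (a + t * q0) = psi a * unity_root N (a * n) * unity_root s (t * n)"
      unfolding f_def by (simp add: dchar_add_mult[OF psi] add_mult_distrib unity_root_add)
  qed
  also have "\<dots> = (\<Sum>a<q0. psi a * unity_root N (a * n)) * (\<Sum>t<s. unity_root s (t * n))"
    by (simp add: sum_product sum.swap[of _ "{..<s}"])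
  also have "\<dots> = (if s dvd n then of_nat s * gauss_sum (n div s) psi q0 else 0)"
  proof (cases "s dvd n")
    case True
    then obtain n' where n': "n = s * n'" ..
    have "unity_root N (a * n) = unity_root q0 (a * n')" for a
      using unity_root_mult_mult[OF \<open>s > 0\<close>, of q0 "a * n'"] by (simp add: N_def n' mult_ac)
    moreover have "psi q0 = psi 0"
      using dchar_mod[OF psi, of q0] by simp
    ultimately show ?thesis
      using True \<open>s > 0\<close> by (simp add: sum_unity_root gauss_sum_lessThan n')
  qed (simp add: sum_unity_root[OF \<open>s > 0\<close>])
  finally show ?thesis
    by (simp add: N_def)
qed

lemma induced_char_moebius:
  assumes "induces psi q0 chi q"
  shows "chi k = psi k * (\<Sum>e | e dvd q div q0 \<and> e dvd k. of_int (moebius e))"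
proof -
  have psi: "dchar q0 psi" and chi: "dchar q chi" and "q0 dvd q"
    and chi_eq: "chi k = psi k * principal_char q k"
    using assms unfolding induces_def by auto
  define r where "r = q div q0"
  have q: "q = q0 * r"
    using \<open>q0 dvd q\<close> by (simp add: r_def)
  have "gcd k r > 0"
    using dchar_modulus_pos[OF chi] q by simp
  moreover have "{e. e dvd r \<and> e dvd k} = {e. e dvd gcd k r}"
    by auto
  ultimately have "(\<Sum>e | e dvd r \<and> e dvd k. of_int (moebius e) :: complex) = (if coprime k r then 1 else 0)"
    using sum_moebius_divisors[of "gcd k r"] by (simp add: coprime_iff_gcd_eq_1)
  moreover have "coprime k q \<longleftrightarrow> coprime k r" if "psi k \<noteq> 0"
    using that dchar_eq_0_iff[OF psi] q by auto
  ultimately show ?thesis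
    unfolding chi_eq principal_char_def r_def[symmetric] by auto
qed

lemma gauss_sum_restrict_multiples:
  assumes psi: "dchar m psi" and "e dvd q" "q > 0"
  shows "(\<Sum>k | k \<in> {1..q} \<and> e dvd k. psi k * unity_root q (k * n)) = psi e * gauss_sum n psi (q div e)"
proof -
  have "e > 0"
    using assms by (auto intro: gr0I)
  have "{k. k \<in> {1..q} \<and> e dvd k} = (*) e ` {1..q div e}"
  proof
    show "(*) e ` {1..q div e} \<subseteq> {k. k \<in> {1..q} \<and> e dvd k}"
      using \<open>e > 0\<close> \<open>e dvd q\<close> by (auto elim!: dvdE)
    show "{k. k \<in> {1..q} \<and> e dvd k} \<subseteq> (*) e ` {1..q div e}"
      using \<open>e > 0\<close> \<open>e dvd q\<close> by (auto elim!: dvdE intro!: imageI simp: image_iff)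
  qed
  moreover have "unity_root q (e * j * n) = unity_root (q div e) (j * n)" for j
    using unity_root_mult_mult[OF \<open>e > 0\<close>, of "q div e" "j * n"] \<open>e dvd q\<close> by (simp add: mult.assoc)
  ultimately show ?thesis
    using \<open>e > 0\<close>
    by (simp add: sum.reindex inj_on_def gauss_sum_unity_root sum_distrib_left dchar_mult[OF psi] mult.assoc)
qed

lemma gauss_sum_induced_moebius:
  assumes ind: "induces psi q0 chi q"
  shows "gauss_sum n chi q = (\<Sum>e | e dvd q div q0. of_int (moebius e) * psi e * gauss_sum n psi (q div e))"
proof -
  have psi: "dchar q0 psi" and "q > 0" and "q0 dvd q"
    using ind dchar_modulus_pos unfolding induces_def by auto
  define r where "r = q div q0"
  have "r > 0"
    using \<open>q > 0\<close> \<open>q0 dvd q\<close> by (auto simp: r_def intro: gr0I)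
  have "gauss_sum n chi q = (\<Sum>k\<in>{1..q}. \<Sum>e | e dvd r \<and> e dvd k. of_int (moebius e) * (psi k * unity_root q (k * n)))"
    unfolding gauss_sum_unity_root induced_char_moebius[OF ind, of _] r_def[symmetric]
    by (simp add: sum_distrib_left sum_distrib_right mult_ac)
  also have "\<dots> = (\<Sum>e | e dvd r. \<Sum>k | k \<in> {1..q} \<and> e dvd k. of_int (moebius e) * (psi k * unity_root q (k * n)))"
    using sum.swap_restrict[of "{1..q}" "{e. e dvd r}" _ "\<lambda>k e. e dvd k"] \<open>r > 0\<close> by simp
  also have "\<dots> = (\<Sum>e | e dvd r. of_int (moebius e) * psi e * gauss_sum n psi (q div e))"
  proof (intro sum.cong refl)
    fix e assume "e \<in> {e. e dvd r}"
    then have "e dvd q"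
      using \<open>q0 dvd q\<close> dvd_mult2[of e "q div q0" q0] by (simp add: r_def)
    then show "(\<Sum>k | k \<in> {1..q} \<and> e dvd k. of_int (moebius e) * (psi k * unity_root q (k * n)))
        = of_int (moebius e) * psi e * gauss_sum n psi (q div e)"
      using gauss_sum_restrict_multiples[OF psi _ \<open>q > 0\<close>] by (simp add: sum_distrib_left[symmetric] mult.assoc)
  qed
  finally show ?thesis
    by (simp add: r_def)
qed

lemma gauss_sum_induced:
  assumes ind: "induces psi q0 chi q" and prim: "primitive q0 psi"
  shows "gauss_sum n chi q = (\<Sum>s | s dvd q div q0.
    gauss_sum 1 psi q0 * of_nat s * of_int (moebius (q div q0 div s)) * psi (q div q0 div s) *
      (if s dvd n then cnj (psi (n div s)) else 0))"
proof -
  have psi: "dchar q0 psi" and "q > 0" and "q0 dvd q"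
    using ind dchar_modulus_pos unfolding induces_def by auto
  define r where "r = q div q0"
  have q: "q = q0 * r"
    using \<open>q0 dvd q\<close> by (simp add: r_def)
  with \<open>q > 0\<close> have "r > 0"
    by (auto intro: gr0I)
  have "gauss_sum n chi q = (\<Sum>e | e dvd r. of_int (moebius e) * psi e * gauss_sum n psi (q div e))"
    unfolding gauss_sum_induced_moebius[OF ind] r_def ..
  also have "\<dots> = (\<Sum>s | s dvd r. of_int (moebius (r div s)) * psi (r div s) * gauss_sum n psi (q div (r div s)))"
    by (rule sum_divisors_div_reindex[OF \<open>r > 0\<close>, symmetric])
  also have "\<dots> = (\<Sum>s | s dvd r. of_int (moebius (r div s)) * psi (r div s) * gauss_sum n psi (q0 * s))"
    using \<open>r > 0\<close> by (intro sum.cong refl) (auto simp: q elim!: dvdE)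
  also have "\<dots> = (\<Sum>s | s dvd r. gauss_sum 1 psi q0 * of_nat s * of_int (moebius (r div s)) * psi (r div s) *
      (if s dvd n then cnj (psi (n div s)) else 0))"
  proof (intro sum.cong refl)
    fix s assume "s \<in> {s. s dvd r}"
    with \<open>r > 0\<close> have "s > 0"
      by (auto intro: gr0I)
    then show "of_int (moebius (r div s)) * psi (r div s) * gauss_sum n psi (q0 * s) =
        gauss_sum 1 psi q0 * of_nat s * of_int (moebius (r div s)) * psi (r div s) *
          (if s dvd n then cnj (psi (n div s)) else 0)"
      by (simp add: gauss_sum_multiple_modulus[OF psi] gauss_sum_primitive[OF prim, of "n div s"])
  qed
  finally show ?thesis
    by (simp add: r_def)
qed

theorem lemma4p2:
  fixes chi psi :: "nat \<Rightarrow> complex" and q q0 n :: nat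
  assumes "dchar q chi" and "primitive q0 psi" and "induces psi q0 chi q" and "n \<ge> 1"
  shows "(\<Sum>d | d dvd n. gauss_sum d chi q * of_int (moebius (n div d)) * cnj (psi (n div d))) =
    (if n dvd (q div q0)
     then of_nat n * gauss_sum 1 psi q0 * of_int (moebius (q div (n * q0))) * psi (q div (n * q0))
     else 0)"
proof -
  have psi: "dchar q0 psi" and "q0 > 0" "q > 0" "n > 0"
    using assms dchar_modulus_pos unfolding primitive_def by auto
  define r where "r = q div q0"
  have "r > 0"
    using \<open>q > 0\<close> \<open>q0 > 0\<close> assms(3) by (auto simp: r_def induces_def intro: gr0I)
  have cnj_psi_1: "cnj (psi 1) = 1"
    using dchar_1[OF psi] by simp
  have cnj_psi_mult: "cnj (psi (a * b)) = cnj (psi a) * cnj (psi b)" for a b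
    by (simp add: dchar_mult[OF psi])
  define c where "c s = gauss_sum 1 psi q0 * of_nat s * of_int (moebius (r div s)) * psi (r div s)" for s
  have "gauss_sum d chi q = (\<Sum>s | s dvd r. c s * (if s dvd d then cnj (psi (d div s)) else 0))" for d
    unfolding gauss_sum_induced[OF assms(3,2)] c_def r_def ..
  then have "(\<Sum>d | d dvd n. gauss_sum d chi q * of_int (moebius (n div d)) * cnj (psi (n div d)))
      = (if n dvd r then c n else 0)"
    using sum_divisors_mult_moebius_inversion[OF \<open>n > 0\<close> \<open>r > 0\<close> cnj_psi_1 cnj_psi_mult] by simp
  moreover have "q div (n * q0) = r div n"
    unfolding r_def div_mult2_eq[symmetric] by (simp add: mult.commute)
  ultimately show ?thesis
    unfolding r_def[symmetric] c_def by (simp add: mult_ac)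
qed

end
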